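(* Let $\mathcal S=(\mathcal P,\mathcal L)$ be a linear space with $v$ points and constant line size $k$, $2<k<v$; let $G\le\mathrm{Aut}(\mathcal S)$ be transitive on lines, and let $\mathfrak C$ be a non-trivial $G$-invariant partition of $\mathcal P$ with $d$ classes of size $c$; let $C\in\mathfrak C$ and let $G^C$ be the permutation group induced on $C$ by its setwise stabiliser $G_C$. (i) If $G^C$ is $3$-homogeneous, then $\mathrm{spec}\,\mathcal S=\{1,2\}$. (ii) If $G^C$ is $2$-homogeneous, then $\mathrm{spec}\,\mathcal S=\{1,h\}$ for some $h\ge2$.
   Context: A linear space: a finite set $\mathcal P$ of points and a set $\mathcal L$ of subsets (lines) such that any two distinct points lie on exactly one line and each line has at least two points. For a line $\lambda$ and $i\ge0$, $d_i$ is the number of classes $C\in\mathfrak C$ with $|C\cap\lambda|=i$ (independent of $\lambda$); $\mathrm{spec}\,\mathcal S=\{i>0:d_i\ne0\}$. A permutation group is $t$-homogeneous if it is transitive on $t$-element subsets. *)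

theory Defs
  imports "HOL-Combinatorics.Permutations"
begin

definition linear_space :: "'a set \<Rightarrow> 'a set set \<Rightarrow> bool" where
  "linear_space P L \<longleftrightarrow> finite P \<and>
     (\<forall>l\<in>L. l \<subseteq> P \<and> 2 \<le> card l) \<and>
     (\<forall>x\<in>P. \<forall>y\<in>P. x \<noteq> y \<longrightarrow> (\<exists>!l. l \<in> L \<and> x \<in> l \<and> y \<in> l))"

definition automorphism :: "'a set \<Rightarrow> 'a set set \<Rightarrow> ('a \<Rightarrow> 'a) \<Rightarrow> bool" where
  "automorphism P L g \<longleftrightarrow> g permutes P \<and> (image g) ` L = L"

definition perm_group :: "'a set \<Rightarrow> ('a \<Rightarrow> 'a) set \<Rightarrow> bool" where
  "perm_group P G \<longleftrightarrow> (\<forall>g\<in>G. g permutes P) \<and> id \<in> G \<and>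
     (\<forall>g\<in>G. \<forall>h\<in>G. g \<circ> h \<in> G) \<and> (\<forall>g\<in>G. inv g \<in> G)"

definition line_transitive :: "'a set set \<Rightarrow> ('a \<Rightarrow> 'a) set \<Rightarrow> bool" where
  "line_transitive L G \<longleftrightarrow> (\<forall>l1\<in>L. \<forall>l2\<in>L. \<exists>g\<in>G. g ` l1 = l2)"

definition is_partition :: "'a set \<Rightarrow> 'a set set \<Rightarrow> bool" where
  "is_partition P \<C> \<longleftrightarrow> \<Union>\<C> = P \<and> {} \<notin> \<C> \<and>
     (\<forall>C1\<in>\<C>. \<forall>C2\<in>\<C>. C1 \<noteq> C2 \<longrightarrow> C1 \<inter> C2 = {})"

definition G_invariant :: "('a \<Rightarrow> 'a) set \<Rightarrow> 'a set set \<Rightarrow> bool" where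
  "G_invariant G \<C> \<longleftrightarrow> (\<forall>g\<in>G. \<forall>C\<in>\<C>. g ` C \<in> \<C>)"

definition induced_group :: "('a \<Rightarrow> 'a) set \<Rightarrow> 'a set \<Rightarrow> ('a \<Rightarrow> 'a) set" where
  "induced_group G C = (\<lambda>g. restrict g C) ` {g \<in> G. g ` C = C}"

definition homogeneous :: "nat \<Rightarrow> ('a \<Rightarrow> 'a) set \<Rightarrow> 'a set \<Rightarrow> bool" where
  "homogeneous t H X \<longleftrightarrow>
     (\<forall>S T. S \<subseteq> X \<and> T \<subseteq> X \<and> card S = t \<and> card T = t \<longrightarrow> (\<exists>h\<in>H. h ` S = T))"

definition d_num :: "'a set set \<Rightarrow> 'a set \<Rightarrow> nat \<Rightarrow> nat" where
  "d_num \<C> ln i = card {C \<in> \<C>. card (C \<inter> ln) = i}"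

definition spec :: "'a set set \<Rightarrow> 'a set \<Rightarrow> nat set" where
  "spec \<C> ln = {i. 0 < i \<and> d_num \<C> ln i \<noteq> 0}"

end

theory Submission
  imports Defs
begin

text \<open>
  A line-transitive group G is point-transitive: each G-orbit U meets every line in the same
  number m of points, and counting the points of U along the r lines through a point inside U
  and through a point outside U gives r(m - 1) + 1 = |U| = rm, impossible for r > 1. Hence G is
  transitive on the classes, every line meets the classes in the same set of intersection sizes,
  and each size is realised by the fixed class C.

  No line contains a whole class, since lines would then inject into classes, against
  Fisher's inequality b \<ge> v > d. The size 1 must occur: if all classes met all lines in 0 or
  h \<ge> 2 points, counting through a point of C gives c = r(h - 1) + 1, which cannot divide
  v = r(k - 1) + 1 because 2h \<le> k \<le> r.

  If G^C is 2-homogeneous, two lines meeting C in at least two points can be mapped onto each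
  other by an element stabilising C, so all these intersections have one size h. If G^C is
  3-homogeneous, a line meeting C in three points is fixed by elements moving these points
  to any triple of C, so it would contain C; hence h = 2.
\<close>

lemma two_le_cardE:
  assumes "2 \<le> card A"
  obtains a b where "a \<in> A" "b \<in> A" "a \<noteq> b"
proof -
  obtain T where "T \<subseteq> A" "card T = 2"
    using obtain_subset_with_card_n[OF assms] by blast
  then show ?thesis
    using that unfolding card_2_iff by blast
qed

lemma mult_pred_plus_1_not_dvd:
  fixes r h k :: nat
  assumes "2 \<le> h" "h < k" "k \<le> r"
  shows "\<not> r * (h - 1) + 1 dvd r * (k - 1) + 1"
proof
  define c where "c = r * (h - 1) + 1"
  assume "c dvd r * (k - 1) + 1"
  moreover have "r * (k - 1) + 1 = c + r * (k - h)"
    using assms unfolding c_def by (simp add: diff_mult_distrib2)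
  ultimately have "c dvd r * (k - h)"
    by (simp add: dvd_add_right_iff)
  moreover have "coprime c r"
    using gcd_add_mult[of r "h - 1" 1] unfolding c_def
    by (simp add: coprime_iff_gcd_eq_1 gcd.commute mult.commute)
  ultimately have "c dvd k - h"
    using coprime_dvd_mult_right_iff by blast
  then have "c \<le> k - h"
    using assms by (simp add: dvd_imp_le)
  moreover have "r * 1 \<le> r * (h - 1)"
    using assms by (intro mult_le_mono2) simp
  then have "r + 1 \<le> c"
    unfolding c_def by simp
  ultimately show False
    using assms by linarith
qed

locale uniform_linear_space =
  fixes P :: "'a set" and L :: "'a set set" and k :: nat
  assumes linear_space: "linear_space P L"
    and card_line: "l \<in> L \<Longrightarrow> card l = k"
    and two_le_k: "2 \<le> k"
    and k_less_card_P: "k < card P"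
begin

lemma finite_P: "finite P"
  using linear_space unfolding linear_space_def by blast

lemma line_subset: "l \<in> L \<Longrightarrow> l \<subseteq> P"
  using linear_space unfolding linear_space_def by blast

lemma finite_line: "l \<in> L \<Longrightarrow> finite l"
  using line_subset finite_P finite_subset by blast

lemma finite_L: "finite L"
  using line_subset finite_P by (meson Pow_iff finite_Pow_iff finite_subset subsetI)

lemma line_exists: "x \<in> P \<Longrightarrow> y \<in> P \<Longrightarrow> x \<noteq> y \<Longrightarrow> \<exists>l\<in>L. x \<in> l \<and> y \<in> l"
  using linear_space unfolding linear_space_def by blast

lemma line_unique:
  assumes "l1 \<in> L" "l2 \<in> L" "x \<in> l1" "y \<in> l1" "x \<in> l2" "y \<in> l2" "x \<noteq> y"
  shows "l1 = l2"
proof -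
  have "x \<in> P" "y \<in> P"
    using assms line_subset by auto
  then have "\<exists>!l. l \<in> L \<and> x \<in> l \<and> y \<in> l"
    using linear_space assms(7) unfolding linear_space_def by blast
  then show ?thesis
    using assms by blast
qed

lemma card_Int_lines_le_1:
  assumes "l1 \<in> L" "l2 \<in> L" "l1 \<noteq> l2"
  shows "card (l1 \<inter> l2) \<le> 1"
  using assms line_unique finite_line card_le_Suc0_iff_eq[of "l1 \<inter> l2"]
  by (metis IntD1 IntD2 One_nat_def finite_Int)

definition lines_through :: "'a \<Rightarrow> 'a set set" where
  "lines_through x = {l \<in> L. x \<in> l}"

lemma finite_lines_through: "finite (lines_through x)"
  unfolding lines_through_def using finite_L by simp

lemma card_eq_sum_lines_through:
  assumes "x \<in> P" "A \<subseteq> P" "x \<notin> A"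
  shows "card A = (\<Sum>l\<in>lines_through x. card (l \<inter> A))"
proof -
  have "A = (\<Union>l\<in>lines_through x. l \<inter> A)"
    using assms line_exists unfolding lines_through_def by blast
  moreover have "card (\<Union>l\<in>lines_through x. l \<inter> A) = (\<Sum>l\<in>lines_through x. card (l \<inter> A))"
  proof (rule card_UN_disjoint)
    show "\<forall>l\<in>lines_through x. finite (l \<inter> A)"
      using finite_line unfolding lines_through_def by blast
    show "\<forall>l1\<in>lines_through x. \<forall>l2\<in>lines_through x. l1 \<noteq> l2 \<longrightarrow> l1 \<inter> A \<inter> (l2 \<inter> A) = {}"
      using line_unique assms(3) unfolding lines_through_def by blast
  qed (rule finite_lines_through)
  ultimately show ?thesis
    by simp
qed

lemma card_minus_1_eq_sum_lines_through:
  assumes "x \<in> A" "A \<subseteq> P"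
  shows "card A - 1 = (\<Sum>l\<in>lines_through x. card (l \<inter> A) - 1)"
proof -
  have "card A - 1 = card (A - {x})"
    using assms(1) by (simp add: card_Diff_singleton)
  also have "\<dots> = (\<Sum>l\<in>lines_through x. card (l \<inter> (A - {x})))"
    using assms by (intro card_eq_sum_lines_through) auto
  also have "\<dots> = (\<Sum>l\<in>lines_through x. card (l \<inter> A) - 1)"
  proof (rule sum.cong)
    fix l
    assume "l \<in> lines_through x"
    then have "x \<in> l \<inter> A"
      using assms(1) unfolding lines_through_def by auto
    moreover have "l \<inter> (A - {x}) = l \<inter> A - {x}"
      by blast
    ultimately show "card (l \<inter> (A - {x})) = card (l \<inter> A) - 1"
      by (simp add: card_Diff_singleton)
  qed simp
  finally show ?thesis .
qed

lemma card_P_minus_1: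
  assumes "x \<in> P"
  shows "card P - 1 = card (lines_through x) * (k - 1)"
proof -
  have "card P - 1 = (\<Sum>l\<in>lines_through x. card (l \<inter> P) - 1)"
    using assms by (rule card_minus_1_eq_sum_lines_through) simp
  also have "\<dots> = (\<Sum>l\<in>lines_through x. k - 1)"
    using line_subset card_line by (intro sum.cong) (auto simp: lines_through_def Int_absorb2)
  finally show ?thesis
    by simp
qed

definition replication_number :: nat where
  "replication_number = (card P - 1) div (k - 1)"

lemma card_lines_through:
  assumes "x \<in> P"
  shows "card (lines_through x) = replication_number"
  using card_P_minus_1[OF assms] two_le_k unfolding replication_number_def by simp

lemma P_nonempty: "P \<noteq> {}"
  using k_less_card_P by auto

lemma card_P_eq: "card P = replication_number * (k - 1) + 1"
proof -
  obtain x where "x \<in> P"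
    using P_nonempty by blast
  then have "card P - 1 = replication_number * (k - 1)"
    using card_P_minus_1 card_lines_through by simp
  then show ?thesis
    using k_less_card_P by linarith
qed

lemma card_eq_by_pencil_mem:
  assumes "x \<in> A" "A \<subseteq> P" "\<forall>l\<in>lines_through x. card (l \<inter> A) = m"
  shows "card A = replication_number * (m - 1) + 1"
proof -
  have "card A - 1 = (\<Sum>l\<in>lines_through x. m - 1)"
    using card_minus_1_eq_sum_lines_through[OF assms(1,2)] assms(3) by simp
  also have "\<dots> = replication_number * (m - 1)"
    using card_lines_through assms(1,2) by auto
  moreover have "card A > 0"
    using assms(1) finite_subset[OF assms(2) finite_P] by (auto simp: card_gt_0_iff)
  ultimately show ?thesis
    by linarith
qed

lemma card_eq_by_pencil_not_mem:
  assumes "x \<in> P" "A \<subseteq> P" "x \<notin> A" "\<forall>l\<in>lines_through x. card (l \<inter> A) = m"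
  shows "card A = replication_number * m"
proof -
  have "card A = (\<Sum>l\<in>lines_through x. m)"
    using card_eq_sum_lines_through[OF assms(1-3)] assms(4) by simp
  also have "\<dots> = replication_number * m"
    using card_lines_through[OF assms(1)] by simp
  finally show ?thesis .
qed

lemma exists_line_avoiding:
  assumes "x \<in> P"
  shows "\<exists>l\<in>L. x \<notin> l"
proof -
  have "card (P - {x}) \<noteq> 0"
    using k_less_card_P two_le_k assms by (simp add: card_Diff_singleton)
  then have "P - {x} \<noteq> {}"
    by (metis card.empty)
  then obtain y where y: "y \<in> P" "y \<noteq> x"
    by blast
  then obtain l where l: "l \<in> L" "x \<in> l" "y \<in> l"
    using line_exists assms by blast
  have "\<not> P \<subseteq> l"
  proof
    assume "P \<subseteq> l"
    then have "card P \<le> card l"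
      by (rule card_mono[OF finite_line[OF l(1)]])
    then show False
      using card_line[OF l(1)] k_less_card_P by simp
  qed
  then obtain z where z: "z \<in> P" "z \<notin> l"
    by blast
  then obtain m where m: "m \<in> L" "y \<in> m" "z \<in> m"
    using line_exists y l by blast
  have "x \<notin> m"
    using line_unique[OF m(1) l(1), of x y] l m y z by blast
  then show ?thesis
    using m by blast
qed

lemma k_le_replication_number: "k \<le> replication_number"
proof -
  obtain x where x: "x \<in> P"
    using P_nonempty by blast
  then obtain l where l: "l \<in> L" "x \<notin> l"
    using exists_line_avoiding by blast
  have "k = (\<Sum>m\<in>lines_through x. card (m \<inter> l))"
    using card_eq_sum_lines_through[OF x line_subset[OF l(1)] l(2)] card_line[OF l(1)] by simp
  also have "\<dots> \<le> (\<Sum>m\<in>lines_through x. 1)"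
    using l card_Int_lines_le_1 by (intro sum_mono) (auto simp: lines_through_def)
  also have "\<dots> = replication_number"
    using card_lines_through[OF x] by simp
  finally show ?thesis .
qed

lemma lines_through_nonempty:
  assumes "x \<in> P"
  shows "lines_through x \<noteq> {}"
  using card_lines_through[OF assms] k_le_replication_number two_le_k by auto

lemma card_P_le_card_L: "card P \<le> card L"
proof -
  have "card P * replication_number = (\<Sum>x\<in>P. card {l \<in> L. x \<in> l})"
    using card_lines_through unfolding lines_through_def by simp
  also have "\<dots> = (\<Sum>l\<in>L. k)"
  proof (rule sum_multicount_gen[OF finite_P finite_L])
    have "{x \<in> P. x \<in> l} = l" if "l \<in> L" for l
      using line_subset[OF that] by blast
    then show "\<forall>l\<in>L. card {x \<in> P. x \<in> l} = k"
      using card_line by simp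
  qed
  finally have "card P * replication_number = card L * k"
    by simp
  moreover have "card P * k \<le> card P * replication_number"
    using k_le_replication_number by simp
  ultimately show ?thesis
    using two_le_k by simp
qed

lemma eq_P_if_card_Int_lines_const:
  assumes "U \<subseteq> P" "U \<noteq> {}" "\<forall>l\<in>L. card (l \<inter> U) = m"
  shows "U = P"
proof (rule ccontr)
  assume "U \<noteq> P"
  then obtain y where y: "y \<in> P" "y \<notin> U"
    using assms(1) by blast
  obtain x where x: "x \<in> U"
    using assms(2) by blast
  then obtain l where l: "l \<in> L" "x \<in> l"
    using lines_through_nonempty assms(1) unfolding lines_through_def by blast
  have "card (l \<inter> U) \<noteq> 0"
    using l x finite_line[OF l(1)] by (auto simp: card_eq_0_iff)
  then have "m \<noteq> 0"
    using assms(3) l(1) by simp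
  moreover have "card U = replication_number * (m - 1) + 1"
    using assms by (intro card_eq_by_pencil_mem[OF x]) (auto simp: lines_through_def)
  moreover have "card U = replication_number * m"
    using assms y by (intro card_eq_by_pencil_not_mem) (auto simp: lines_through_def)
  ultimately have "replication_number = 1"
    by (cases m) auto
  then show False
    using k_le_replication_number two_le_k by simp
qed

end

locale line_transitive_group = uniform_linear_space P L k
  for P :: "'a set" and L :: "'a set set" and k :: nat +
  fixes G :: "('a \<Rightarrow> 'a) set"
  assumes perm_group: "perm_group P G"
    and automorphism: "g \<in> G \<Longrightarrow> automorphism P L g"
    and line_transitive: "line_transitive L G"
begin

lemma permutes_P: "g \<in> G \<Longrightarrow> g permutes P"
  using perm_group unfolding perm_group_def by blast

lemma inj_elem: "g \<in> G \<Longrightarrow> inj g"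
  using permutes_P permutes_inj by blast

lemma id_mem: "id \<in> G"
  using perm_group unfolding perm_group_def by blast

lemma comp_mem: "g \<in> G \<Longrightarrow> h \<in> G \<Longrightarrow> g \<circ> h \<in> G"
  using perm_group unfolding perm_group_def by blast

lemma image_line: "g \<in> G \<Longrightarrow> l \<in> L \<Longrightarrow> g ` l \<in> L"
  using automorphism unfolding automorphism_def by blast

lemma ex_map_line: "l1 \<in> L \<Longrightarrow> l2 \<in> L \<Longrightarrow> \<exists>g\<in>G. g ` l1 = l2"
  using line_transitive unfolding line_transitive_def by blast

lemma card_image_elem: "g \<in> G \<Longrightarrow> card (g ` A) = card A"
  using card_image inj_on_subset[OF inj_elem subset_UNIV] by blast

lemma card_image_Int: "g \<in> G \<Longrightarrow> card (g ` A \<inter> g ` B) = card (A \<inter> B)"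
  using card_image_elem[of g "A \<inter> B"] image_Int[OF inj_elem] by simp

lemma point_transitive:
  assumes "x \<in> P" "y \<in> P"
  shows "\<exists>g\<in>G. g x = y"
proof -
  define U where "U = (\<lambda>g. g x) ` G"
  have closed: "g u \<in> U" if g: "g \<in> G" and u: "u \<in> U" for g u
  proof -
    obtain h where h: "h \<in> G" "u = h x"
      using u unfolding U_def by blast
    then have "g u = (g \<circ> h) x"
      by simp
    then show ?thesis
      using comp_mem[OF g h(1)] unfolding U_def by blast
  qed
  have card_le: "card (l1 \<inter> U) \<le> card (l2 \<inter> U)" if l: "l1 \<in> L" "l2 \<in> L" for l1 l2
  proof -
    obtain g where g: "g \<in> G" "g ` l1 = l2"
      using ex_map_line l by blast
    then have "g ` (l1 \<inter> U) \<subseteq> l2 \<inter> U"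
      using closed by blast
    then have "card (g ` (l1 \<inter> U)) \<le> card (l2 \<inter> U)"
      using finite_line l(2) by (simp add: card_mono)
    then show ?thesis
      using card_image_elem[OF g(1)] by simp
  qed
  obtain l0 where l0: "l0 \<in> L"
    using lines_through_nonempty assms(1) unfolding lines_through_def by blast
  have "\<forall>l\<in>L. card (l \<inter> U) = card (l0 \<inter> U)"
  proof
    fix l
    assume "l \<in> L"
    then show "card (l \<inter> U) = card (l0 \<inter> U)"
      using card_le[OF _ l0] card_le[OF l0] by (simp add: le_antisym)
  qed
  moreover have "U \<subseteq> P"
    using assms(1) permutes_in_image[OF permutes_P] unfolding U_def by auto
  moreover have "U \<noteq> {}"
    using id_mem unfolding U_def by blast
  ultimately have "U = P"
    using eq_P_if_card_Int_lines_const by blast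
  then show ?thesis
    using assms(2) unfolding U_def by blast
qed

lemma homogeneous_induced_groupE:
  assumes "homogeneous t (induced_group G C) C" "S \<subseteq> C" "T \<subseteq> C" "card S = t" "card T = t"
  obtains g where "g \<in> G" "g ` C = C" "g ` S = T"
proof -
  obtain h where h: "h \<in> induced_group G C" "h ` S = T"
    using assms unfolding homogeneous_def by blast
  then obtain g where g: "g \<in> G" "g ` C = C" "h = restrict g C"
    unfolding induced_group_def by blast
  have "h ` S = g ` S"
    using g(3) assms(2) by (auto simp: restrict_def)
  then show ?thesis
    using that g h by simp
qed

lemma card_Int_line_eq_if_2_homogeneous:
  assumes hom: "homogeneous 2 (induced_group G C) C"
    and l: "l1 \<in> L" "l2 \<in> L" and two: "2 \<le> card (C \<inter> l1)" "2 \<le> card (C \<inter> l2)"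
  shows "card (C \<inter> l1) = card (C \<inter> l2)"
proof -
  obtain a1 b1 where ab1: "a1 \<in> C \<inter> l1" "b1 \<in> C \<inter> l1" "a1 \<noteq> b1"
    using two(1) by (rule two_le_cardE)
  obtain a2 b2 where ab2: "a2 \<in> C \<inter> l2" "b2 \<in> C \<inter> l2" "a2 \<noteq> b2"
    using two(2) by (rule two_le_cardE)
  have "{a1, b1} \<subseteq> C" "{a2, b2} \<subseteq> C" "card {a1, b1} = 2" "card {a2, b2} = 2"
    using ab1 ab2 by auto
  then obtain g where g: "g \<in> G" "g ` C = C" "g ` {a1, b1} = {a2, b2}"
    by (rule homogeneous_induced_groupE[OF hom])
  then have "a2 \<in> g ` l1" "b2 \<in> g ` l1"
    using ab1 by blast+
  then have "g ` l1 = l2"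
    using line_unique[OF image_line[OF g(1) l(1)] l(2)] ab2 by blast
  then show ?thesis
    using card_image_Int[OF g(1), of C l1] g(2) by simp
qed

lemma subset_line_if_3_homogeneous:
  assumes hom: "homogeneous 3 (induced_group G C) C"
    and l: "l \<in> L" and three: "3 \<le> card (C \<inter> l)"
  shows "C \<subseteq> l"
proof
  fix w
  assume w: "w \<in> C"
  obtain S where S: "S \<subseteq> C \<inter> l" "card S = 3"
    using obtain_subset_with_card_n[OF three] by blast
  then obtain a b where ab: "a \<in> S" "b \<in> S" "a \<noteq> b"
    using two_le_cardE[of S] by auto
  show "w \<in> l"
  proof (cases "w \<in> {a, b}")
    case True
    then show ?thesis
      using ab S by blast
  next
    case False
    then have "S \<subseteq> C" "{a, b, w} \<subseteq> C" "card {a, b, w} = 3"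
      using ab S w by auto
    then obtain g where g: "g \<in> G" "g ` C = C" "g ` S = {a, b, w}"
      using homogeneous_induced_groupE[OF hom _ _ S(2)] by blast
    then have "a \<in> g ` l" "b \<in> g ` l" "w \<in> g ` l"
      using S(1) by blast+
    moreover have "a \<in> l" "b \<in> l"
      using ab S(1) by blast+
    ultimately have "g ` l = l"
      using line_unique[OF image_line[OF g(1) l] l] ab(3) by blast
    then show ?thesis
      using \<open>w \<in> g ` l\<close> by simp
  qed
qed

end

locale block_system = line_transitive_group P L k G
  for P :: "'a set" and L :: "'a set set" and k :: nat and G :: "('a \<Rightarrow> 'a) set" +
  fixes \<C> :: "'a set set" and c d :: nat
  assumes partition: "is_partition P \<C>"
    and invariant: "G_invariant G \<C>"
    and card_classes: "card \<C> = d"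
    and card_class: "D \<in> \<C> \<Longrightarrow> card D = c"
    and one_less_c: "1 < c"
    and one_less_d: "1 < d"
begin

lemma class_subset: "D \<in> \<C> \<Longrightarrow> D \<subseteq> P"
  using partition unfolding is_partition_def by blast

lemma finite_class: "D \<in> \<C> \<Longrightarrow> finite D"
  using class_subset finite_P finite_subset by blast

lemma finite_classes: "finite \<C>"
  using class_subset finite_P by (meson Pow_iff finite_Pow_iff finite_subset subsetI)

lemma class_unique: "D1 \<in> \<C> \<Longrightarrow> D2 \<in> \<C> \<Longrightarrow> x \<in> D1 \<Longrightarrow> x \<in> D2 \<Longrightarrow> D1 = D2"
  using partition unfolding is_partition_def by blast

lemma image_class: "g \<in> G \<Longrightarrow> D \<in> \<C> \<Longrightarrow> g ` D \<in> \<C>"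
  using invariant unfolding G_invariant_def by blast

lemma two_points_in_class:
  assumes "D \<in> \<C>"
  obtains a b where "a \<in> D" "b \<in> D" "a \<noteq> b"
proof -
  have "2 \<le> card D"
    using card_class[OF assms] one_less_c by simp
  then show ?thesis
    using that by (rule two_le_cardE)
qed

lemma two_classes:
  obtains C D where "C \<in> \<C>" "D \<in> \<C>" "C \<noteq> D"
proof -
  have "2 \<le> card \<C>"
    using card_classes one_less_d by simp
  then show ?thesis
    using that by (rule two_le_cardE)
qed

lemma card_P_eq_c_mult_d: "card P = c * d"
proof -
  have "card P = card (\<Union>\<C>)"
    using partition unfolding is_partition_def by simp
  also have "\<dots> = (\<Sum>D\<in>\<C>. card D)"
    using partition finite_class
    by (intro card_Union_disjoint) (auto simp: is_partition_def pairwise_def disjnt_def)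
  finally show ?thesis
    using card_class card_classes by simp
qed

lemma class_transitive:
  assumes "D1 \<in> \<C>" "D2 \<in> \<C>"
  shows "\<exists>g\<in>G. g ` D1 = D2"
proof -
  obtain x where x: "x \<in> D1"
    using two_points_in_class[OF assms(1)] by metis
  obtain y where y: "y \<in> D2"
    using two_points_in_class[OF assms(2)] by metis
  obtain g where g: "g \<in> G" "g x = y"
    using point_transitive class_subset assms x y by blast
  have "g ` D1 = D2"
    using class_unique[OF image_class[OF g(1) assms(1)] assms(2)] x y g(2) by blast
  then show ?thesis
    using g(1) by blast
qed

definition intersection_sizes :: "nat set" where
  "intersection_sizes = {card (D \<inter> l) | D l. D \<in> \<C> \<and> l \<in> L}"

lemma intersection_sizes_on_line:
  assumes "l \<in> L"
  shows "intersection_sizes = {card (D \<inter> l) | D. D \<in> \<C>}"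
proof -
  have "card (D \<inter> l') \<in> {card (D \<inter> l) | D. D \<in> \<C>}" if D: "D \<in> \<C>" and l': "l' \<in> L" for D l'
  proof -
    obtain g where g: "g \<in> G" "g ` l' = l"
      using ex_map_line l' assms by blast
    then have "card (g ` D \<inter> l) = card (D \<inter> l')"
      using card_image_Int[of g D l'] by simp
    then show ?thesis
      using image_class[OF g(1) D] by force
  qed
  then show ?thesis
    using assms unfolding intersection_sizes_def by blast
qed

lemma intersection_sizes_of_class:
  assumes "C \<in> \<C>"
  shows "intersection_sizes = (\<lambda>l. card (C \<inter> l)) ` L"
proof -
  have "card (D \<inter> l) \<in> (\<lambda>l. card (C \<inter> l)) ` L" if D: "D \<in> \<C>" and l: "l \<in> L" for D l
  proof -
    obtain g where g: "g \<in> G" "g ` D = C"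
      using class_transitive D assms by blast
    then have "card (C \<inter> g ` l) = card (D \<inter> l)"
      using card_image_Int[of g D l] by simp
    then show ?thesis
      using image_line[OF g(1) l] by force
  qed
  then show ?thesis
    using assms unfolding intersection_sizes_def by blast
qed

lemma spec_eq_intersection_sizes:
  assumes "l \<in> L"
  shows "spec \<C> l = intersection_sizes - {0}"
  unfolding spec_def d_num_def intersection_sizes_on_line[OF assms]
  using finite_classes by (auto simp: card_eq_0_iff)

lemma two_le_intersection_size: "\<exists>i\<in>intersection_sizes. 2 \<le> i"
proof -
  obtain C where C: "C \<in> \<C>"
    using two_classes by metis
  then obtain a b where ab: "a \<in> C" "b \<in> C" "a \<noteq> b"
    by (rule two_points_in_class)
  then obtain l where l: "l \<in> L" "a \<in> l" "b \<in> l"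
    using line_exists class_subset[OF C] by blast
  then have "card {a, b} \<le> card (C \<inter> l)"
    using ab finite_class[OF C] by (intro card_mono) auto
  then have "2 \<le> card (C \<inter> l)"
    using ab(3) by simp
  then show ?thesis
    using C l unfolding intersection_sizes_def by blast
qed

lemma c_notin_intersection_sizes: "c \<notin> intersection_sizes"
proof
  assume "c \<in> intersection_sizes"
  then obtain D0 l0 where D0: "D0 \<in> \<C>" "l0 \<in> L" "card (D0 \<inter> l0) = c"
    unfolding intersection_sizes_def by blast
  then have "D0 \<inter> l0 = D0"
    using card_subset_eq[OF finite_class[OF D0(1)] Int_lower1] card_class by simp
  have "\<forall>l\<in>L. \<exists>D. D \<in> \<C> \<and> D \<subseteq> l"
  proof
    fix l
    assume "l \<in> L"
    then obtain g where "g \<in> G" "g ` l0 = l"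
      using ex_map_line D0(2) by blast
    then show "\<exists>D. D \<in> \<C> \<and> D \<subseteq> l"
      using image_class[OF _ D0(1)] \<open>D0 \<inter> l0 = D0\<close> by blast
  qed
  then obtain f where f: "\<forall>l\<in>L. f l \<in> \<C> \<and> f l \<subseteq> l"
    by (rule bchoice[THEN exE])
  have "inj_on f L"
  proof
    fix l1 l2
    assume l: "l1 \<in> L" "l2 \<in> L" "f l1 = f l2"
    obtain a b where ab: "a \<in> f l1" "b \<in> f l1" "a \<noteq> b"
      using f l(1) two_points_in_class by blast
    then have "a \<in> l1" "b \<in> l1" "a \<in> l2" "b \<in> l2"
      using f l by blast+
    then show "l1 = l2"
      using line_unique[OF l(1,2)] ab(3) by blast
  qed
  moreover have "f ` L \<subseteq> \<C>"
    using f by blast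
  ultimately have "card L \<le> d"
    using card_inj_on_le[OF _ _ finite_classes] card_classes by blast
  moreover have "d < c * d"
    using mult_less_cancel2[of 1 d c] one_less_c one_less_d by simp
  ultimately show False
    using card_P_le_card_L card_P_eq_c_mult_d by simp
qed

lemma intersection_sizes_not_subset:
  assumes "2 \<le> h"
  shows "\<not> intersection_sizes \<subseteq> {0, h}"
proof
  assume sizes: "intersection_sizes \<subseteq> {0, h}"
  obtain C D where CD: "C \<in> \<C>" "D \<in> \<C>" "C \<noteq> D"
    by (rule two_classes)
  obtain x where x: "x \<in> C"
    using two_points_in_class[OF CD(1)] by blast
  obtain y where y: "y \<in> D"
    using two_points_in_class[OF CD(2)] by blast
  have card_meet: "card (E \<inter> l) = h" if E: "E \<in> \<C>" and l: "l \<in> L" "z \<in> E" "z \<in> l" for E l z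
  proof -
    have "card (E \<inter> l) \<noteq> 0"
      using l finite_class[OF E] by (auto simp: card_eq_0_iff)
    moreover have "card (E \<inter> l) \<in> intersection_sizes"
      using E l(1) unfolding intersection_sizes_def by blast
    ultimately show ?thesis
      using sizes by auto
  qed
  have "\<forall>l\<in>lines_through x. card (l \<inter> C) = h"
    using card_meet[OF CD(1) _ x] unfolding lines_through_def by (simp add: Int_commute)
  then have c_eq: "c = replication_number * (h - 1) + 1"
    using card_eq_by_pencil_mem[OF x class_subset[OF CD(1)]] card_class[OF CD(1)] by simp
  have "x \<noteq> y"
    using class_unique CD x y by blast
  then obtain l where l: "l \<in> L" "x \<in> l" "y \<in> l"
    using line_exists class_subset CD x y by blast
  have "(C \<inter> l) \<inter> (D \<inter> l) = {}"
    using class_unique CD by blast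
  then have "card (C \<inter> l) + card (D \<inter> l) = card ((C \<inter> l) \<union> (D \<inter> l))"
    using finite_class CD by (simp add: card_Un_disjoint)
  also have "\<dots> \<le> k"
    using card_mono[OF finite_line[OF l(1)]] card_line[OF l(1)] by (metis Int_Un_distrib2 Int_lower2)
  finally have "h < k"
    using card_meet[OF CD(1) l(1) x l(2)] card_meet[OF CD(2) l(1) y l(3)] assms by simp
  moreover have "c dvd replication_number * (k - 1) + 1"
    using card_P_eq card_P_eq_c_mult_d by (metis dvd_triv_left)
  ultimately show False
    using mult_pred_plus_1_not_dvd[OF assms _ k_le_replication_number] c_eq by simp
qed

lemma nonzero_intersection_sizes_eq:
  assumes "2 \<le> h" "h \<in> intersection_sizes" "intersection_sizes \<subseteq> {0, 1, h}"
  shows "intersection_sizes - {0} = {1, h}"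
proof -
  have "1 \<in> intersection_sizes"
    using intersection_sizes_not_subset[OF assms(1)] assms(3) by blast
  then show ?thesis
    using assms by auto
qed

lemma spec_eq_1_2_if_3_homogeneous:
  assumes "C \<in> \<C>" "homogeneous 3 (induced_group G C) C" "l \<in> L"
  shows "spec \<C> l = {1, 2}"
proof -
  have sizes: "intersection_sizes \<subseteq> {0, 1, 2}"
  proof
    fix i
    assume "i \<in> intersection_sizes"
    then obtain l' where l': "l' \<in> L" "i = card (C \<inter> l')"
      using intersection_sizes_of_class[OF assms(1)] by blast
    have "\<not> 3 \<le> i"
    proof
      assume "3 \<le> i"
      then have "C \<subseteq> l'"
        using subset_line_if_3_homogeneous[OF assms(2) l'(1)] l'(2) by simp
      then have "i = c"
        using l'(2) card_class[OF assms(1)] by (simp add: Int_absorb2)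
      then show False
        using \<open>i \<in> intersection_sizes\<close> c_notin_intersection_sizes by simp
    qed
    then show "i \<in> {0, 1, 2}"
      by auto
  qed
  obtain i where i: "i \<in> intersection_sizes" "2 \<le> i"
    using two_le_intersection_size by blast
  then have "i = 2"
    using sizes by auto
  then have "2 \<in> intersection_sizes"
    using i(1) by simp
  then show ?thesis
    using nonzero_intersection_sizes_eq[OF _ _ sizes] spec_eq_intersection_sizes[OF assms(3)] by simp
qed

lemma spec_eq_1_h_if_2_homogeneous:
  assumes "C \<in> \<C>" "homogeneous 2 (induced_group G C) C"
  shows "\<exists>h\<ge>2. \<forall>l\<in>L. spec \<C> l = {1, h}"
proof -
  obtain l0 where l0: "l0 \<in> L" "2 \<le> card (C \<inter> l0)"
    using two_le_intersection_size intersection_sizes_of_class[OF assms(1)] by auto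
  have "intersection_sizes \<subseteq> {0, 1, card (C \<inter> l0)}"
  proof
    fix i
    assume "i \<in> intersection_sizes"
    then obtain l where "l \<in> L" "i = card (C \<inter> l)"
      using intersection_sizes_of_class[OF assms(1)] by blast
    then show "i \<in> {0, 1, card (C \<inter> l0)}"
      using card_Int_line_eq_if_2_homogeneous[OF assms(2) _ l0(1) _ l0(2)] by fastforce
  qed
  moreover have "card (C \<inter> l0) \<in> intersection_sizes"
    using intersection_sizes_of_class[OF assms(1)] l0(1) by blast
  ultimately have "intersection_sizes - {0} = {1, card (C \<inter> l0)}"
    using l0(2) by (intro nonzero_intersection_sizes_eq)
  then show ?thesis
    using l0(2) spec_eq_intersection_sizes by auto
qed

end

theorem lemma5p2:
  fixes P :: "'a set" and L :: "'a set set" and G :: "('a \<Rightarrow> 'a) set"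
    and \<C> :: "'a set set" and v k c d :: nat and C :: "'a set"
  assumes "linear_space P L"
    and "card P = v"
    and "\<forall>l\<in>L. card l = k"
    and "2 < k" and "k < v"
    and "perm_group P G"
    and "\<forall>g\<in>G. automorphism P L g"
    and "line_transitive L G"
    and "is_partition P \<C>"
    and "G_invariant G \<C>"
    and "card \<C> = d" and "\<forall>C'\<in>\<C>. card C' = c"
    and "1 < c" and "1 < d"
    and "C \<in> \<C>"
  shows "(homogeneous 3 (induced_group G C) C \<longrightarrow> (\<forall>ln\<in>L. spec \<C> ln = {1, 2}))
       \<and> (homogeneous 2 (induced_group G C) C \<longrightarrow>
            (\<exists>h\<ge>2. \<forall>ln\<in>L. spec \<C> ln = {1, h}))"
proof -
  interpret block_system P L k G \<C> c d
    using assms by unfold_locales auto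
  show ?thesis
    using spec_eq_1_2_if_3_homogeneous spec_eq_1_h_if_2_homogeneous \<open>C \<in> \<C>\<close> by blast
qed

end
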